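(* Let $p\ge1$ and let $u,v\in E_1$ be such that the sequences $(d^u_n)_{n}$ and $(d^v_n)_{n}$ are compatible. Then $\mathcal L^u$ and $\mathcal L^v$ are compatible.
   Context: $X=\{0,\dots,p\}$; $\mathcal G_{S_p}$ is generated by $e_1,\dots,e_p$ acting on $X^\infty$ by $e_i(0w)=i\,e_i(w)$, $e_i(iw)=0w$, $e_i(jw)=jw$ for $j\notin\{0,i\}$; $\Gamma^p_w$ is the Schreier graph on the orbit of $w$ (edges $x$—$e_i(x)$), with graph distance $d$. $E_1$ is the set of $w$ with $\Gamma^p_w$ one-ended; each $w\in E_1$ has an infinite decomposition $w=0^ka_1u_1a_2u_2\cdots$ ($k\ge0$, $a_j\in\{1,\dots,p\}$, $a_{j+1}\ne a_j$, $u_j\in\{0,a_j\}^\ast$ finite). Let $N_j=k+j+\sum_{\ell\le j}|u_\ell|$. The path of cycles of $w$ consists of the $e_{a_j}$-cycles $P^w_j$ with vertex sets $\{0,a_j\}^{N_j}a_{j+1}u_{j+1}\cdots$; $\mathcal L^w=(2^{N_j})_{j\ge1}$. Put $w(0)=w$ and $w(j)=0^{N_j}a_{j+1}u_{j+1}a_{j+2}u_{j+2}\cdots$ (the common vertex of $P^w_j$ and $P^w_{j+1}$), and $d^w_j=d(w(j-1),w(j))$ for $j\ge1$. Integer sequences $(x_i),(y_i)$ are compatible if there exist $l,h$ with $x_{l+n}=y_{h+n}$ for all $n$. *)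

theory Defs
  imports Main
begin

text \<open>Infinite words over X = {0,...,p} are functions nat => nat (letter n at position n),
  with all letters at most p.\<close>

definition word :: "nat \<Rightarrow> (nat \<Rightarrow> nat) \<Rightarrow> bool" where
  "word p w \<longleftrightarrow> (\<forall>n. w n \<le> p)"

text \<open>Generator e_i: e_i(0w) = i e_i(w), e_i(iw) = 0w, e_i(jw) = jw for j not in {0,i}.
  Unfolded: every position preceded only by zeros is rewritten (0 to i, i to 0),
  all later positions are unchanged.\<close>

definition gen :: "nat \<Rightarrow> (nat \<Rightarrow> nat) \<Rightarrow> (nat \<Rightarrow> nat)" where
  "gen i w = (\<lambda>n. if (\<forall>m<n. w m = 0)
                  then (if w n = 0 then i else if w n = i then 0 else w n)
                  else w n)"

definition adj :: "nat \<Rightarrow> (nat \<Rightarrow> nat) \<Rightarrow> (nat \<Rightarrow> nat) \<Rightarrow> bool" where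
  "adj p x y \<longleftrightarrow> (\<exists>i\<in>{1..p}. y = gen i x \<or> x = gen i y)"

definition orbit :: "nat \<Rightarrow> (nat \<Rightarrow> nat) \<Rightarrow> (nat \<Rightarrow> nat) set" where
  "orbit p w = {x. (adj p)\<^sup>*\<^sup>* w x}"

definition gdist :: "nat \<Rightarrow> (nat \<Rightarrow> nat) \<Rightarrow> (nat \<Rightarrow> nat) \<Rightarrow> nat" where
  "gdist p x y = (LEAST n. (adj p ^^ n) x y)"

definition conn_minus :: "nat \<Rightarrow> (nat \<Rightarrow> nat) \<Rightarrow> (nat \<Rightarrow> nat) set
     \<Rightarrow> (nat \<Rightarrow> nat) \<Rightarrow> (nat \<Rightarrow> nat) \<Rightarrow> bool" where
  "conn_minus p w K = (\<lambda>a b. adj p a b \<and> a \<in> orbit p w - K \<and> b \<in> orbit p w - K)\<^sup>*\<^sup>*"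

definition one_ended :: "nat \<Rightarrow> (nat \<Rightarrow> nat) \<Rightarrow> bool" where
  "one_ended p w \<longleftrightarrow> (\<forall>K. finite K \<longrightarrow>
     (\<exists>x\<in>orbit p w - K. infinite {y. conn_minus p w K x y}) \<and>
     (\<forall>x\<in>orbit p w - K. \<forall>y\<in>orbit p w - K.
        infinite {z. conn_minus p w K x z} \<and> infinite {z. conn_minus p w K y z}
        \<longrightarrow> conn_minus p w K x y))"

definition E1 :: "nat \<Rightarrow> (nat \<Rightarrow> nat) set" where
  "E1 p = {w. word p w \<and> one_ended p w}"

text \<open>Decomposition w = 0^k a_1 u_1 a_2 u_2 ... (a and us indexed from 1).
  Npos k us j = N_j = k + j + sum_{l<=j} |u_l|; N_0 = k.\<close>

definition Npos :: "nat \<Rightarrow> (nat \<Rightarrow> nat list) \<Rightarrow> nat \<Rightarrow> nat" where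
  "Npos k us j = k + j + (\<Sum>l\<in>{1..j}. length (us l))"

definition decomp :: "nat \<Rightarrow> (nat \<Rightarrow> nat) \<Rightarrow> nat \<Rightarrow> (nat \<Rightarrow> nat) \<Rightarrow> (nat \<Rightarrow> nat list) \<Rightarrow> bool" where
  "decomp p w k a us \<longleftrightarrow>
     (\<forall>n<k. w n = 0) \<and>
     (\<forall>j\<ge>1. a j \<in> {1..p} \<and> a (j+1) \<noteq> a j \<and> set (us j) \<subseteq> {0, a j} \<and>
        w (Npos k us (j-1)) = a j \<and>
        (\<forall>i<length (us j). w (Npos k us (j-1) + 1 + i) = us j ! i))"

text \<open>w(j) = 0^{N_j} a_{j+1} u_{j+1} ... , i.e. w with its first N_j letters replaced by 0;
  w(0) = w since the first N_0 = k letters of w are 0.\<close>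

definition wj :: "(nat \<Rightarrow> nat) \<Rightarrow> nat \<Rightarrow> (nat \<Rightarrow> nat list) \<Rightarrow> nat \<Rightarrow> (nat \<Rightarrow> nat)" where
  "wj w k us j = (\<lambda>n. if n < Npos k us j then 0 else w n)"

text \<open>Sequences indexed from 1 in the paper are represented shifted: entry n is the (n+1)-st term.\<close>

definition dseq :: "nat \<Rightarrow> (nat \<Rightarrow> nat) \<Rightarrow> nat \<Rightarrow> (nat \<Rightarrow> nat list) \<Rightarrow> nat \<Rightarrow> nat" where
  "dseq p w k us n = gdist p (wj w k us n) (wj w k us (n+1))"

definition Lseq :: "nat \<Rightarrow> (nat \<Rightarrow> nat list) \<Rightarrow> nat \<Rightarrow> nat" where
  "Lseq k us n = 2 ^ Npos k us (n+1)"

definition compatible :: "(nat \<Rightarrow> 'a) \<Rightarrow> (nat \<Rightarrow> 'a) \<Rightarrow> bool" where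
  "compatible x y \<longleftrightarrow> (\<exists>l h. \<forall>n. x (l+n) = y (h+n))"

end

theory Submission
  imports Defs
begin

text \<open>Put M = N_n, N = N_{n+1} and a = a_{n+1}. Both w(n) and w(n+1) lie on the e_a-cycle
  P_{n+1}, whose 2^N vertices are the words of {0,a}^N followed by the tail of w(n+1). Code such a
  vertex by the binary number whose m-th digit is 1 iff its m-th letter is 0; then e_a acts on the
  cycle as the odometer, adding 1 modulo 2^N. Every vertex off the cycle hangs on it at a single
  vertex, so the code of this attachment vertex changes by at most 1 (mod 2^N) along each edge,
  and d(w(n), w(n+1)) is the cyclic distance min (2^N - 1 - V) (V + 1) between the code V of w(n)
  and the code 2^N - 1 of w(n+1). As w(n) = 0^M a ..., V + 1 is 2^M times an odd number, and so
  is this distance. Hence the 2-adic valuations of the d-sequence are the N_n, and a common shift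
  of two d-sequences is a common shift of the L-sequences.\<close>

lemma relpowp_symmetric:
  assumes "symp R" and "(R ^^ n) x z"
  shows "(R ^^ n) z x"
  using assms(2)
proof (induction n arbitrary: z)
  case 0
  then show ?case by simp
next
  case (Suc n)
  then obtain u where "(R ^^ n) x u" and "R u z" by (blast elim: relpowp_Suc_E)
  then show ?case using Suc.IH assms(1) by (blast intro: relpowp_Suc_I2 dest: sympD)
qed

lemma even_if_two_power_times_eq:
  fixes o1 o2 :: nat
  assumes "i < j" and "2 ^ i * o1 = 2 ^ j * o2"
  shows "even o1"
proof -
  have "(2::nat) ^ j = 2 ^ i * 2 ^ (j - i)"
    using \<open>i < j\<close> by (simp add: power_add[symmetric])
  then have "o1 = 2 ^ (j - i) * o2" using assms(2) by simp
  then show ?thesis using \<open>i < j\<close> by simp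
qed

lemma two_power_times_odd_unique:
  fixes o1 o2 :: nat
  assumes "2 ^ i * o1 = 2 ^ j * o2" and "odd o1" and "odd o2"
  shows "i = j"
  using even_if_two_power_times_eq[of i j o1 o2] even_if_two_power_times_eq[of j i o2 o1] assms
  by (metis linorder_neqE_nat)

lemma min_complement_eq_two_power_times_odd:
  fixes W t :: nat
  assumes "M < N" and W: "W = 2 ^ M * t" and "odd t" and "W \<le> 2 ^ N"
  shows "\<exists>t'. odd t' \<and> min (2 ^ N - W) W = 2 ^ M * t'"
proof -
  have split: "(2::nat) ^ N = 2 ^ M * 2 ^ (N - M)"
    using \<open>M < N\<close> by (simp add: power_add[symmetric])
  have "t \<le> 2 ^ (N - M)" using W \<open>W \<le> 2 ^ N\<close> split by simp
  moreover have "t \<noteq> 2 ^ (N - M)" using \<open>odd t\<close> \<open>M < N\<close> by auto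
  ultimately have "odd (2 ^ (N - M) - t)" using \<open>odd t\<close> \<open>M < N\<close> by simp
  moreover have "2 ^ N - W = 2 ^ M * (2 ^ (N - M) - t)"
    using W split by (simp add: diff_mult_distrib2)
  ultimately show ?thesis using \<open>odd t\<close> W by (cases "2 ^ N - W \<le> W") auto
qed

lemma min_le_abs_if_dvd_diff:
  fixes q r S :: int
  assumes "0 \<le> q" and "0 \<le> r" and "(q + r) dvd (q - S)"
  shows "min q r \<le> \<bar>S\<bar>"
proof -
  obtain k where k: "q - S = (q + r) * k" using assms(3) by (elim dvdE)
  consider "k = 0" | "k \<ge> 1" | "k \<le> -1" by linarith
  then show ?thesis
  proof cases
    case 2
    then have "(q + r) * k \<ge> q + r" using assms by (simp add: mult_le_cancel_left1)
    then show ?thesis using k by linarith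
  next
    case 3
    then have "(q + r) * k \<le> - (q + r)" using assms
      by (metis add_nonneg_nonneg mult_left_mono mult_minus1_right)
    then show ?thesis using k by linarith
  qed (use k in simp)
qed

lemma symp_adj: "symp (adj p)"
  unfolding adj_def by (auto intro: sympI)

lemma gdist_le: "(adj p ^^ n) x y \<Longrightarrow> gdist p x y \<le> n"
  unfolding gdist_def by (rule Least_le)

lemma relpowp_gdist: "(adj p ^^ n) x y \<Longrightarrow> (adj p ^^ gdist p x y) x y"
  unfolding gdist_def by (rule LeastI)

lemma relpowp_adj_gen_iterate:
  assumes "c \<in> {1..p}"
  shows "(adj p ^^ q) z ((gen c ^^ q) z)"
proof (induction q)
  case 0
  then show ?case by simp
next
  case (Suc q)
  have "adj p ((gen c ^^ q) z) (gen c ((gen c ^^ q) z))"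
    using assms unfolding adj_def by blast
  with Suc.IH show ?case by (auto intro: relpowp_Suc_I)
qed

lemma leading_zeros_if_gen_changes: "gen c z m \<noteq> z m \<Longrightarrow> m' < m \<Longrightarrow> z m' = 0"
  by (auto simp: gen_def split: if_splits)

lemma gen_on_zero_prefix: "\<forall>m'<m. z m' = 0 \<Longrightarrow> z m = 0 \<Longrightarrow> gen c z m = c"
  by (simp add: gen_def)

lemma gen_first_nonzero:
  assumes "\<forall>m<f. z m = 0" and "z f \<noteq> 0"
  shows "gen c z m = (if m < f then c else if m = f \<and> z f = c then 0 else z m)"
  using assms by (cases "m < f"; cases "m = f") (auto simp: gen_def intro: exI[of _ f])

lemma obtain_first_nonzero:
  fixes z :: "nat \<Rightarrow> nat"
  assumes "z i \<noteq> 0"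
  obtains f where "f \<le> i" and "z f \<noteq> 0" and "\<forall>m<f. z m = 0"
proof
  define f where "f = (LEAST f. z f \<noteq> 0)"
  show "z f \<noteq> 0" unfolding f_def by (rule LeastI[of _ i]) (rule assms)
  show "f \<le> i" unfolding f_def by (rule Least_le) (rule assms)
  show "\<forall>m<f. z m = 0" unfolding f_def using not_less_Least by blast
qed

definition zero_code :: "nat \<Rightarrow> (nat \<Rightarrow> nat) \<Rightarrow> nat" where
  "zero_code N z = (\<Sum>m<N. if z m = 0 then 2 ^ m else 0)"

lemma zero_code_Suc: "zero_code (Suc N) z = zero_code N z + (if z N = 0 then 2 ^ N else 0)"
  by (simp add: zero_code_def)

lemma zero_code_all_zero: "\<forall>m<N. z m = 0 \<Longrightarrow> zero_code N z = 2 ^ N - 1"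
  by (simp add: zero_code_def lessThan_atLeast0 sum_power2)

lemma zero_code_less: "zero_code N z < 2 ^ N"
proof -
  have "zero_code N z \<le> (\<Sum>m<N. 2 ^ m)"
    unfolding zero_code_def by (rule sum_mono) simp
  also have "\<dots> = 2 ^ N - 1" by (simp add: lessThan_atLeast0 sum_power2)
  finally show ?thesis using zero_less_power[of "2::nat" N] by linarith
qed

lemma zero_code_split:
  assumes "f < N"
  shows "zero_code N z = zero_code f z + (if z f = 0 then 2 ^ f else 0)
    + (\<Sum>m\<in>{Suc f..<N}. if z m = 0 then 2 ^ m else 0)"
  unfolding zero_code_def lessThan_atLeast0
  using assms by (simp add: sum.atLeastLessThan_concat[symmetric, of 0 "Suc f" N])

lemma zero_code_inj:
  assumes "\<forall>m<N. z m \<in> {0, a} \<and> z' m \<in> {0, a}" and "zero_code N z = zero_code N z'"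
  shows "\<forall>m<N. z m = z' m"
  using assms
proof (induction N)
  case 0
  then show ?case by simp
next
  case (Suc N)
  have "(z N = 0) = (z' N = 0)"
    using Suc.prems(2) zero_code_less[of N z] zero_code_less[of N z'] unfolding zero_code_Suc
    by (cases "z N = 0"; cases "z' N = 0") simp_all
  moreover have "z N \<in> {0, a}" and "z' N \<in> {0, a}" using Suc.prems(1) by auto
  ultimately have top: "z N = z' N" by auto
  have "\<forall>m<N. z m \<in> {0, a} \<and> z' m \<in> {0, a}" using Suc.prems(1) by simp
  moreover have "zero_code N z = zero_code N z'" using top Suc.prems(2) unfolding zero_code_Suc by simp
  ultimately have "\<forall>m<N. z m = z' m" by (rule Suc.IH)
  with top show ?case by (simp add: less_Suc_eq)
qed

locale gen_cycle =
  fixes p N a :: nat and y :: "nat \<Rightarrow> nat"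
  assumes letter: "a \<in> {1..p}" and N_pos: "0 < N"
    and y_prefix: "\<forall>m<N. y m = 0" and y_exit: "y N \<notin> {0, a}"
begin

definition on_cycle :: "(nat \<Rightarrow> nat) \<Rightarrow> bool" where
  "on_cycle z \<longleftrightarrow> (\<forall>m\<ge>N. z m = y m) \<and> (\<forall>m<N. z m \<in> {0, a})"

text \<open>The vertex at which the branch of z is attached to the cycle.\<close>

definition retract :: "(nat \<Rightarrow> nat) \<Rightarrow> nat \<Rightarrow> nat" where
  "retract z = (if \<forall>m\<ge>N. z m = y m
     then (\<lambda>n. if \<exists>m. n \<le> m \<and> m < N \<and> z m \<notin> {0, a} then 0 else z n)
     else y)"

lemma retract_tail:
  "\<forall>m\<ge>N. z m = y m \<Longrightarrow>
    retract z n = (if \<exists>m. n \<le> m \<and> m < N \<and> z m \<notin> {0, a} then 0 else z n)"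
  unfolding retract_def by simp

lemma retract_off_tail: "\<not> (\<forall>m\<ge>N. z m = y m) \<Longrightarrow> retract z = y"
  unfolding retract_def by (rule if_not_P)

lemma on_cycle_y: "on_cycle y"
  using y_prefix unfolding on_cycle_def by simp

lemma retract_on_cycle: "on_cycle z \<Longrightarrow> retract z = z"
  unfolding on_cycle_def by (fastforce intro!: ext simp: retract_tail)

lemma on_cycle_eqI:
  assumes "on_cycle z" and "on_cycle z'" and "zero_code N z = zero_code N z'"
  shows "z = z'"
proof
  fix n
  have "\<forall>m<N. z m = z' m" using assms zero_code_inj[of N z a z'] unfolding on_cycle_def by blast
  then show "z n = z' n" using assms(1,2) unfolding on_cycle_def by (cases "n < N") auto
qed

lemma on_cycle_gen:
  assumes "on_cycle z"
  shows "on_cycle (gen a z)"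
proof -
  have "gen a z m = z m" if "m \<ge> N" for m
  proof (rule ccontr)
    assume changed: "gen a z m \<noteq> z m"
    then have zeros: "\<forall>m'<m. z m' = 0" using leading_zeros_if_gen_changes by blast
    then have "m = N" using that assms y_exit unfolding on_cycle_def by force
    then show False using changed zeros assms y_exit unfolding on_cycle_def gen_def by auto
  qed
  then show ?thesis using assms unfolding on_cycle_def by (auto simp: gen_def)
qed

lemma zero_code_gen:
  assumes "on_cycle z"
  shows "zero_code N (gen a z) mod 2 ^ N = (zero_code N z + 1) mod 2 ^ N"
proof (cases "\<forall>m<N. z m = 0")
  case True
  then have "\<forall>m<N. gen a z m = a" by (simp add: gen_on_zero_prefix)
  then have "zero_code N (gen a z) = 0" using letter unfolding zero_code_def by simp
  moreover have "zero_code N z = 2 ^ N - 1" using True by (rule zero_code_all_zero)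
  ultimately show ?thesis by simp
next
  case False
  then obtain i where "i < N" and "z i \<noteq> 0" by auto
  then obtain f where "f < N" and zf: "z f \<noteq> 0" and zeros: "\<forall>m<f. z m = 0"
    by (metis obtain_first_nonzero le_less_trans)
  then have "z f = a" using assms unfolding on_cycle_def by auto
  then have gen_z: "gen a z m = (if m < f then a else if m = f then 0 else z m)" for m
    using gen_first_nonzero[OF zeros zf] by simp
  have "zero_code N (gen a z) = 2 ^ f + (\<Sum>m\<in>{Suc f..<N}. if z m = 0 then 2 ^ m else 0)"
    using zero_code_split[OF \<open>f < N\<close>, of "gen a z"] letter
    by (simp add: gen_z zero_code_def)
  moreover have "zero_code N z = 2 ^ f - 1 + (\<Sum>m\<in>{Suc f..<N}. if z m = 0 then 2 ^ m else 0)"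
    using zero_code_split[OF \<open>f < N\<close>, of z] zero_code_all_zero[of f z] zeros zf by simp
  ultimately show ?thesis by simp
qed

lemma gen_iterate_on_cycle:
  assumes "on_cycle z"
  shows "on_cycle ((gen a ^^ q) z)
    \<and> zero_code N ((gen a ^^ q) z) mod 2 ^ N = (zero_code N z + q) mod 2 ^ N"
proof (induction q)
  case 0
  then show ?case using assms by simp
next
  case (Suc q)
  then show ?case using on_cycle_gen zero_code_gen[of "(gen a ^^ q) z"] by (simp, metis mod_Suc_eq)
qed

lemma relpowp_adj_on_cycle:
  assumes "on_cycle z" and "on_cycle z'" and "zero_code N z' = (zero_code N z + q) mod 2 ^ N"
  shows "(adj p ^^ q) z z'"
proof -
  have "(gen a ^^ q) z = z'"
  proof (rule on_cycle_eqI)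
    show "on_cycle ((gen a ^^ q) z)" using gen_iterate_on_cycle[OF assms(1)] by blast
    show "zero_code N ((gen a ^^ q) z) = zero_code N z'"
      using gen_iterate_on_cycle[OF assms(1), of q] assms(3) zero_code_less by simp
  qed (rule assms(2))
  then show ?thesis using relpowp_adj_gen_iterate[OF letter, of q z] by simp
qed

lemma retract_eq_base:
  assumes tail: "\<forall>m\<ge>N. z m = y m" and "z (N - 1) \<notin> {0, a}"
  shows "retract z = y"
proof
  fix n
  show "retract z n = y n"
  proof (cases "n < N")
    case True
    then have "\<exists>m. n \<le> m \<and> m < N \<and> z m \<notin> {0, a}"
      using assms(2) by (intro exI[of _ "N - 1"]) auto
    then show ?thesis using tail True y_prefix by (simp add: retract_tail)
  next
    case False
    then show ?thesis using tail by (auto simp: retract_tail)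
  qed
qed

lemma retract_gen_tail_differs:
  assumes tail: "\<not> (\<forall>m\<ge>N. z m = y m)"
  shows "retract (gen c z) = retract z"
proof (cases "\<forall>m\<ge>N. gen c z m = y m")
  case False
  then show ?thesis using tail by (simp add: retract_off_tail)
next
  case gen_tail: True
  from tail obtain m where "m \<ge> N" and "z m \<noteq> y m" by auto
  then have changed: "gen c z m \<noteq> z m" using gen_tail by auto
  then have zeros: "\<forall>m'<m. z m' = 0" using leading_zeros_if_gen_changes by blast
  have "gen c z N = c"
  proof (cases "m = N")
    case True
    moreover have "gen c z N = y N" using gen_tail by simp
    ultimately show ?thesis using changed zeros y_exit by (auto simp: gen_def split: if_splits)
  next
    case False
    then show ?thesis using zeros \<open>m \<ge> N\<close> by (simp add: gen_on_zero_prefix)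
  qed
  then have "c = y N" using gen_tail by simp
  moreover have "gen c z (N - 1) = c"
    using zeros \<open>m \<ge> N\<close> N_pos by (simp add: gen_on_zero_prefix)
  ultimately have "gen c z (N - 1) \<notin> {0, a}" using y_exit by simp
  then have "retract (gen c z) = y" by (rule retract_eq_base[OF gen_tail])
  then show ?thesis using tail by (simp add: retract_off_tail)
qed

lemma retract_gen_tail_lost:
  assumes tail: "\<forall>m\<ge>N. z m = y m" and gen_tail: "\<not> (\<forall>m\<ge>N. gen c z m = y m)"
  shows "retract (gen c z) = retract z"
proof -
  from gen_tail tail obtain m where "m \<ge> N" and "gen c z m \<noteq> z m" by auto
  then have "\<forall>m'<N. z m' = 0" using leading_zeros_if_gen_changes by fastforce
  then have "z = y" using tail y_prefix by (metis ext not_le)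
  then show ?thesis using gen_tail retract_on_cycle[OF on_cycle_y] by (simp add: retract_off_tail)
qed

lemma retract_gen_on_cycle:
  assumes "on_cycle z" and gen_tail: "\<forall>m\<ge>N. gen c z m = y m" and "c \<ge> 1" and "c \<noteq> a"
  shows "retract (gen c z) = retract z"
proof -
  have "z N \<noteq> 0" using assms(1) y_exit unfolding on_cycle_def by simp
  then obtain f where "f \<le> N" and zf: "z f \<noteq> 0" and zeros: "\<forall>m<f. z m = 0"
    by (rule obtain_first_nonzero)
  have "z f \<noteq> c"
  proof
    assume "z f = c"
    have "f = N"
    proof (rule ccontr)
      assume "f \<noteq> N"
      then have "z f \<in> {0, a}" using assms(1) \<open>f \<le> N\<close> unfolding on_cycle_def by simp
      then show False using zf \<open>z f = c\<close> \<open>c \<noteq> a\<close> by simp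
    qed
    then show False
      using gen_tail gen_first_nonzero[OF zeros zf, of c N] \<open>z f = c\<close> y_exit by auto
  qed
  then have gen_z: "gen c z m = (if m < f then c else z m)" for m
    using gen_first_nonzero[OF zeros zf] by simp
  have "retract (gen c z) n = z n" for n
  proof (cases "n < f")
    case True
    then show ?thesis using gen_tail zeros \<open>f \<le> N\<close> \<open>c \<ge> 1\<close> \<open>c \<noteq> a\<close>
      by (auto simp: gen_z retract_tail)
  next
    case False
    then show ?thesis using gen_tail assms(1) unfolding on_cycle_def
      by (auto simp: gen_z retract_tail)
  qed
  then show ?thesis using retract_on_cycle[OF assms(1)] by auto
qed

lemma retract_gen_off_cycle:
  assumes tail: "\<forall>m\<ge>N. z m = y m" and gen_tail: "\<forall>m\<ge>N. gen c z m = y m"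
    and "\<not> on_cycle z"
  shows "retract (gen c z) = retract z"
proof
  fix n
  from assms obtain i where "i < N" and bad: "z i \<notin> {0, a}" unfolding on_cycle_def by auto
  then obtain f where "f \<le> i" and zf: "z f \<noteq> 0" and zeros: "\<forall>m<f. z m = 0"
    by (metis insertI1 obtain_first_nonzero)
  note gen_z = gen_first_nonzero[OF zeros zf, of c]
  show "retract (gen c z) n = retract z n"
  proof (cases "f < n")
    case True
    then have same: "\<forall>m\<ge>n. gen c z m = z m" by (simp add: gen_z)
    then have "(\<exists>m. n \<le> m \<and> m < N \<and> gen c z m \<notin> {0, a})
      \<longleftrightarrow> (\<exists>m. n \<le> m \<and> m < N \<and> z m \<notin> {0, a})" by auto
    then show ?thesis using same tail gen_tail by (auto simp: retract_tail)
  next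
    case False
    have "retract z n = 0" using tail bad \<open>i < N\<close> \<open>f \<le> i\<close> False by (auto simp: retract_tail)
    moreover have "gen c z n = 0 \<or> (\<exists>m. n \<le> m \<and> m < N \<and> gen c z m \<notin> {0, a})"
    proof (cases "f < i \<or> z f \<noteq> c")
      case True
      then have "gen c z i = z i" using gen_z \<open>f \<le> i\<close> by auto
      then show ?thesis using bad \<open>i < N\<close> \<open>f \<le> i\<close> False
        by (intro disjI2 exI[of _ i]) auto
    next
      case False
      then have "f = i" and "c \<notin> {0, a}" using \<open>f \<le> i\<close> bad by auto
      then show ?thesis using gen_z \<open>i < N\<close> \<open>\<not> f < n\<close> False
        by (cases "n = f") (auto intro: exI[of _ n])
    qed
    ultimately show ?thesis using gen_tail by (auto simp: retract_tail)
  qed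
qed

lemma retract_gen:
  assumes "c \<ge> 1"
  shows "retract (gen c z) = retract z \<or> c = a \<and> on_cycle z \<and> on_cycle (gen a z)"
proof (cases "\<forall>m\<ge>N. z m = y m")
  case False
  then show ?thesis by (simp add: retract_gen_tail_differs)
next
  case tail: True
  show ?thesis
  proof (cases "\<forall>m\<ge>N. gen c z m = y m")
    case False
    then show ?thesis using tail by (simp add: retract_gen_tail_lost)
  next
    case gen_tail: True
    consider "\<not> on_cycle z" | "on_cycle z" and "c \<noteq> a" | "on_cycle z" and "c = a" by blast
    then show ?thesis
    proof cases
      case 1
      then show ?thesis using tail gen_tail by (simp add: retract_gen_off_cycle)
    next
      case 2
      then show ?thesis using gen_tail assms by (simp add: retract_gen_on_cycle)
    next
      case 3
      then show ?thesis by (simp add: on_cycle_gen)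
    qed
  qed
qed

definition potential :: "(nat \<Rightarrow> nat) \<Rightarrow> int" where
  "potential z = int (zero_code N (retract z))"

lemma potential_gen:
  assumes "c \<ge> 1"
  shows "\<exists>d\<in>{0, 1}. (2::int) ^ N dvd potential (gen c z) - potential z - d"
proof -
  consider "retract (gen c z) = retract z" | "c = a" and "on_cycle z" and "on_cycle (gen a z)"
    using retract_gen[OF assms] by blast
  then show ?thesis
  proof cases
    case 1
    then show ?thesis by (simp add: potential_def)
  next
    case 2
    have "int (zero_code N (gen a z)) mod 2 ^ N = (int (zero_code N z) + 1) mod 2 ^ N"
      using zero_code_gen[OF 2(2)] by (metis of_nat_Suc of_nat_mod of_nat_numeral of_nat_power
        add.commute plus_1_eq_Suc)
    then have "(2::int) ^ N dvd int (zero_code N (gen a z)) - int (zero_code N z) - 1"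
      by (simp add: mod_eq_dvd_iff diff_diff_eq)
    then show ?thesis using 2 by (simp add: potential_def retract_on_cycle)
  qed
qed

lemma potential_adj:
  assumes "adj p z z'"
  shows "\<exists>d. \<bar>d\<bar> \<le> 1 \<and> (2::int) ^ N dvd potential z' - potential z - d"
proof -
  obtain c where "c \<ge> 1" and "z' = gen c z \<or> z = gen c z'" using assms unfolding adj_def by auto
  then consider "\<exists>d\<in>{0, 1}. (2::int) ^ N dvd potential z' - potential z - d"
    | "\<exists>d\<in>{0, 1}. (2::int) ^ N dvd potential z - potential z' - d"
    using potential_gen by blast
  then show ?thesis
  proof cases
    case 1
    then obtain d :: int where "d \<in> {0, 1}" and "2 ^ N dvd potential z' - potential z - d"
      by blast
    then show ?thesis by (intro exI[of _ d]) auto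
  next
    case 2
    then obtain d :: int where "d \<in> {0, 1}" and "2 ^ N dvd potential z - potential z' - d"
      by blast
    moreover have "potential z' - potential z - (- d) = - (potential z - potential z' - d)"
      by simp
    ultimately have "2 ^ N dvd potential z' - potential z - (- d)" by (metis dvd_minus_iff)
    then show ?thesis using \<open>d \<in> {0, 1}\<close> by (intro exI[of _ "- d"]) auto
  qed
qed

lemma potential_walk:
  assumes "(adj p ^^ L) z z'"
  shows "\<exists>S. \<bar>S\<bar> \<le> int L \<and> (2::int) ^ N dvd potential z' - potential z - S"
  using assms
proof (induction L arbitrary: z')
  case 0
  then show ?case by simp
next
  case (Suc L)
  then obtain w where "(adj p ^^ L) z w" and "adj p w z'" by (blast elim: relpowp_Suc_E)
  then obtain S d where "\<bar>S\<bar> \<le> int L" "(2::int) ^ N dvd potential w - potential z - S"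
    and "\<bar>d\<bar> \<le> 1" "(2::int) ^ N dvd potential z' - potential w - d"
    using Suc.IH potential_adj by blast
  then have "\<bar>S + d\<bar> \<le> int (Suc L)"
    and "(2::int) ^ N dvd potential z' - potential z - (S + d)"
    using dvd_add by (fastforce simp: algebra_simps)+
  then show ?case by blast
qed

lemma gdist_on_cycle:
  assumes "on_cycle x"
  shows "gdist p x y = min (2 ^ N - 1 - zero_code N x) (zero_code N x + 1)"
proof -
  define V where "V = zero_code N x"
  have "V < 2 ^ N" unfolding V_def by (rule zero_code_less)
  have code_y: "zero_code N y = 2 ^ N - 1" using y_prefix by (rule zero_code_all_zero)
  have to_y: "(adj p ^^ (2 ^ N - 1 - V)) x y"
    using \<open>V < 2 ^ N\<close> code_y by (intro relpowp_adj_on_cycle assms on_cycle_y) (simp add: V_def)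
  have "(adj p ^^ (V + 1)) y x"
    using \<open>V < 2 ^ N\<close> code_y by (intro relpowp_adj_on_cycle assms on_cycle_y) (simp add: V_def)
  then have to_x: "(adj p ^^ (V + 1)) x y" using relpowp_symmetric[OF symp_adj] by blast
  obtain S where S: "\<bar>S\<bar> \<le> int (gdist p x y)" and "(2::int) ^ N dvd potential y - potential x - S"
    using potential_walk[OF relpowp_gdist[OF to_y]] by blast
  moreover have "potential y - potential x = int (2 ^ N - 1 - V)"
    using \<open>V < 2 ^ N\<close> code_y unfolding potential_def V_def
    by (simp add: retract_on_cycle[OF on_cycle_y] retract_on_cycle[OF assms] of_nat_diff)
  moreover have "int (2 ^ N - 1 - V) + int (V + 1) = 2 ^ N" using \<open>V < 2 ^ N\<close> by simp
  ultimately have "min (int (2 ^ N - 1 - V)) (int (V + 1)) \<le> \<bar>S\<bar>"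
    using min_le_abs_if_dvd_diff[of "int (2 ^ N - 1 - V)" "int (V + 1)" S] by simp
  then have "min (2 ^ N - 1 - V) (V + 1) \<le> gdist p x y" using S by linarith
  moreover have "gdist p x y \<le> min (2 ^ N - 1 - V) (V + 1)"
    using gdist_le[OF to_y] gdist_le[OF to_x] by (rule min.boundedI)
  ultimately show ?thesis unfolding V_def by (rule antisym[rotated])
qed

lemma gdist_eq_two_power_times_odd:
  assumes "on_cycle x" and "M < N" and "\<forall>m<M. x m = 0" and "x M = a"
  shows "\<exists>t. odd t \<and> gdist p x y = 2 ^ M * t"
proof -
  define R where "R = (\<Sum>m\<in>{Suc M..<N}. if x m = 0 then 2 ^ m else 0 :: nat)"
  have "2 ^ Suc M dvd R"
    unfolding R_def by (intro dvd_sum) (auto intro: le_imp_power_dvd simp del: power_Suc)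
  then obtain r where "R = 2 ^ Suc M * r" by (elim dvdE)
  moreover have "zero_code N x = (2 ^ M - 1) + R"
    using zero_code_split[OF \<open>M < N\<close>] zero_code_all_zero assms(3,4) letter unfolding R_def
    by simp
  ultimately have "zero_code N x + 1 = 2 ^ M * (2 * r + 1)" by simp
  moreover have "zero_code N x + 1 \<le> 2 ^ N" using zero_code_less by (simp add: Suc_le_eq)
  ultimately have "\<exists>t. odd t \<and> min (2 ^ N - (zero_code N x + 1)) (zero_code N x + 1) = 2 ^ M * t"
    using min_complement_eq_two_power_times_odd[OF \<open>M < N\<close>, of _ "2 * r + 1"] by simp
  then show ?thesis using gdist_on_cycle[OF assms(1)] by simp
qed

end

lemma Npos_Suc: "Npos k us (Suc n) = Npos k us n + 1 + length (us (Suc n))"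
  by (simp add: Npos_def)

lemma decomp_letters:
  assumes "decomp p w k a us"
  shows "a (Suc n) \<in> {1..p}" and "a (Suc (Suc n)) \<noteq> a (Suc n)"
    and "w (Npos k us n) = a (Suc n)"
    and "Npos k us n < m \<Longrightarrow> m < Npos k us (Suc n) \<Longrightarrow> w m \<in> {0, a (Suc n)}"
proof -
  have "a (Suc n) \<in> {1..p}" and "a (Suc (Suc n)) \<noteq> a (Suc n)"
    and letters: "set (us (Suc n)) \<subseteq> {0, a (Suc n)}" and "w (Npos k us n) = a (Suc n)"
    and segment: "\<forall>i<length (us (Suc n)). w (Npos k us n + 1 + i) = us (Suc n) ! i"
    using assms unfolding decomp_def by (auto dest: spec[of _ "Suc n"])
  then show "a (Suc n) \<in> {1..p}" and "a (Suc (Suc n)) \<noteq> a (Suc n)"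
    and "w (Npos k us n) = a (Suc n)" by simp_all
  assume "Npos k us n < m" and "m < Npos k us (Suc n)"
  then have "m - Npos k us n - 1 < length (us (Suc n))"
    and "m = Npos k us n + 1 + (m - Npos k us n - 1)" by (auto simp: Npos_Suc)
  then show "w m \<in> {0, a (Suc n)}" using segment letters nth_mem by fastforce
qed

lemma dseq_eq_two_power_times_odd:
  assumes "decomp p w k a us"
  shows "\<exists>t. odd t \<and> dseq p w k us n = 2 ^ Npos k us n * t"
proof -
  define M N x y where "M = Npos k us n" and "N = Npos k us (Suc n)"
    and "x = wj w k us n" and "y = wj w k us (Suc n)"
  have "M < N" unfolding M_def N_def by (simp add: Npos_Suc)
  have x_eq: "x m = (if m < M then 0 else w m)" for m unfolding x_def wj_def M_def by simp
  have y_eq: "y m = (if m < N then 0 else w m)" for m unfolding y_def wj_def N_def by simp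
  note letters = decomp_letters[OF assms, of n, folded M_def N_def]
  have "y N \<notin> {0, a (Suc n)}"
    using decomp_letters[OF assms, of "Suc n"] letters(2) by (simp add: y_eq N_def)
  then interpret gen_cycle p N "a (Suc n)" y
    using letters(1) \<open>M < N\<close> by unfold_locales (auto simp: y_eq)
  have "x m \<in> {0, a (Suc n)}" if "m < N" for m
    using letters(3,4) that by (cases "m < M"; cases "m = M") (auto simp: x_eq)
  then have "on_cycle x" unfolding on_cycle_def using \<open>M < N\<close> by (simp add: x_eq y_eq)
  moreover have "dseq p w k us n = gdist p x y" unfolding dseq_def x_def y_def by simp
  ultimately show ?thesis
    using gdist_eq_two_power_times_odd[OF _ \<open>M < N\<close>, of x] letters(3)
    unfolding M_def[symmetric] by (simp add: x_eq)
qed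

theorem proposition4p20:
  fixes p :: nat and u v :: "nat \<Rightarrow> nat"
    and ku kv :: nat and au av :: "nat \<Rightarrow> nat" and uu uv :: "nat \<Rightarrow> nat list"
  assumes "p \<ge> 1"
    and "u \<in> E1 p" and "v \<in> E1 p"
    and "decomp p u ku au uu" and "decomp p v kv av uv"
    and "compatible (dseq p u ku uu) (dseq p v kv uv)"
  shows "compatible (Lseq ku uu) (Lseq kv uv)"
proof -
  obtain l h where shift: "\<forall>n. dseq p u ku uu (l + n) = dseq p v kv uv (h + n)"
    using assms(6) unfolding compatible_def by blast
  have "Npos ku uu (l + Suc n) = Npos kv uv (h + Suc n)" for n
  proof -
    obtain t where "odd t" and t: "dseq p u ku uu (l + Suc n) = 2 ^ Npos ku uu (l + Suc n) * t"
      using dseq_eq_two_power_times_odd[OF assms(4)] by blast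
    obtain t' where "odd t'" and t': "dseq p v kv uv (h + Suc n) = 2 ^ Npos kv uv (h + Suc n) * t'"
      using dseq_eq_two_power_times_odd[OF assms(5)] by blast
    show ?thesis
      using two_power_times_odd_unique[OF _ \<open>odd t\<close> \<open>odd t'\<close>] shift t t' by metis
  qed
  then show ?thesis unfolding compatible_def Lseq_def by auto
qed

end
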